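(* Let $\theta>0$, $\ell\in[m]$, and $\lambda:=\lfloor 2m/\ell\rfloor$. Consider an instance of stochastic $\mathrm{Top}_\ell$-norm load balancing on $m$ identical machines with independent nonnegative job random variables $\{X_j\}_{j\in J}$ such that $\Pr[X_j\ge\theta]=0$ for every $j$. (i) If $\sum_{j\in J}\beta_\lambda(X_j/4\theta)\le8m$, then for any assignment $\sigma$ we have $\mathbb{E}[\mathrm{Top}_\ell(\mathcal{L}^\sigma)]\le32\alpha\ell\theta$, where $\alpha:=\max\{1,\max_{i\in[m]}\sum_{j:\sigma(j)=i}\beta_\lambda(X_j/4\theta)\}$. (ii) If $\sum_{j\in J}\beta_\lambda(X_j/4\theta)>8m$, then for any assignment $\sigma$ we have $\mathbb{E}[\mathrm{Top}_\ell(\mathcal{L}^\sigma)]>\ell\theta/2$.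
   Context: For a nonnegative random variable $Z$ and $\lambda>1$, the $\lambda$-effective size is $\beta_\lambda(Z):=\log_\lambda\mathbb{E}[\lambda^Z]$ (and $\beta_1(Z):=\mathbb{E}[Z]$). An assignment $\sigma:J\to[m]$ induces the random load vector $\mathcal{L}^\sigma$ with $\mathcal{L}^\sigma_i=\sum_{j:\sigma(j)=i}X_j$. For $x\in\mathbb{R}^m_{\ge0}$, $\mathrm{Top}_\ell(x)$ is the sum of the $\ell$ largest coordinates of $x$. *)

theory Defs
  imports "HOL-Probability.Probability"
begin

definition eff_size :: "'a measure \<Rightarrow> real \<Rightarrow> ('a \<Rightarrow> real) \<Rightarrow> real" where
  "eff_size M lam Z =
     (if lam = 1 then (\<integral>\<omega>. Z \<omega> \<partial>M) else log lam (\<integral>\<omega>. lam powr (Z \<omega>) \<partial>M))"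

text \<open>Top_l(x) for x indexed by machines {..<m}: sum of the l largest coordinates,
  i.e. the maximum of the sum over any l coordinates.\<close>
definition topl :: "nat \<Rightarrow> nat \<Rightarrow> (nat \<Rightarrow> real) \<Rightarrow> real" where
  "topl m l x = Max ((\<lambda>S. \<Sum>i\<in>S. x i) ` {S. S \<subseteq> {..<m} \<and> card S = l})"

definition load :: "'j set \<Rightarrow> ('j \<Rightarrow> nat) \<Rightarrow> ('j \<Rightarrow> 'a \<Rightarrow> real) \<Rightarrow> nat \<Rightarrow> 'a \<Rightarrow> real" where
  "load J \<sigma> X i \<omega> = (\<Sum>j\<in>{j\<in>J. \<sigma> j = i}. X j \<omega>)"

end

theory Submission
  imports Defs
begin

text \<open>Write \<open>Z\<^sub>j = X\<^sub>j / (4\<theta>)\<close>, so that every scaled job size lies in \<open>[0, 1/4)\<close> and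
  load \<open>\<theta>\<close> on a machine is scaled load \<open>1/4\<close>, and let \<open>\<beta>\<^sub>j\<close> be the \<open>\<lambda>\<close>-effective size
  of \<open>Z\<^sub>j\<close>. By independence, \<open>E[\<lambda>^Z(G)] = \<lambda>^\<beta>(G)\<close> for the total scaled size \<open>Z(G)\<close>
  (\<open>total G\<close> below) of any set \<open>G\<close> of jobs.

  (i) \<open>Top\<^sub>\<ell>(x) \<le> \<ell>a + \<Sum>\<^sub>i (x\<^sub>i - a)\<^sup>+\<close> and \<open>y\<^sup>+ \<le> \<lambda>^y / ln \<lambda>\<close>. With \<open>a = \<alpha> + 1\<close> every
  machine contributes at most \<open>1 / (\<lambda> ln \<lambda>)\<close> in expectation, and \<open>m / \<lambda> \<le> \<ell>\<close>.

  (ii) Split the jobs of every machine into disjoint bundles of effective size at least 1,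
  leaving less than 1 per machine; since \<open>\<beta>\<^sub>j \<le> 1/4\<close> there are more than \<open>28m/5\<close> bundles.
  Adding the jobs of a bundle one at a time, its scaled size first reaches \<open>1/4\<close> at a value
  of at most \<open>1/2\<close>; this gives \<open>E[\<lambda>^Z(G); Z(G) \<ge> 1/4] \<le> \<surd>\<lambda> Pr[Z(G) \<ge> 1/4] E[\<lambda>^Z(G)]\<close>,
  so every bundle is heavy (\<open>Z(G) \<ge> 1/4\<close>) with probability at least \<open>(\<surd>\<lambda> - 1)/\<lambda>\<close>, and the
  expected number \<open>E N\<close> of heavy bundles exceeds \<open>\<ell>\<close>. Heavy bundles on the same machine add
  up, so \<open>Top\<^sub>\<ell> \<ge> min(N, \<ell>)/4 \<ge> (\<ell>/4)(1 - (1 - 1/\<ell>)^N)\<close> in scaled units, and since the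
  bundles are independent, \<open>E (1 - 1/\<ell>)^N \<le> exp(-E N/\<ell>) < 1/2\<close>.\<close>

lemma max_0_le_powr_div_ln:
  fixes b y :: real
  assumes "1 < b"
  shows "max 0 y \<le> b powr y / ln b"
proof -
  have "y * ln b \<le> b powr y"
    using exp_gt_self[of "y * ln b"] assms by (simp add: powr_def)
  then show ?thesis
    using assms by (simp add: pos_le_divide_eq)
qed

lemma mult_one_minus_power_le_min:
  fixes l :: real
  assumes "1 \<le> l"
  shows "l * (1 - (1 - 1 / l) ^ n) \<le> min n l"
proof -
  have "1 - n / l \<le> (1 - 1 / l) ^ n"
    using Bernoulli_inequality[of "- 1 / l" n] assms by simp
  then have "l * (1 - (1 - 1 / l) ^ n) \<le> l * (n / l)"
    using assms by (intro mult_left_mono) auto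
  moreover have "0 \<le> (1 - 1 / l) ^ n"
    using assms by simp
  ultimately show ?thesis
    using assms by (simp add: mult_left_le)
qed

lemma prod_one_minus_indicator:
  fixes c :: real
  assumes "finite K"
  shows "(\<Prod>k\<in>K. 1 - c * indicator (S k) x) = (1 - c) ^ card {k \<in> K. x \<in> S k}"
proof -
  have "(\<Prod>k\<in>K. 1 - c * indicator (S k) x) = (\<Prod>k\<in>K. if x \<in> S k then 1 - c else 1)"
    by (intro prod.cong) auto
  also have "\<dots> = (\<Prod>k\<in>{k \<in> K. x \<in> S k}. 1 - c)"
    using assms by (rule prod.inter_filter[symmetric])
  finally show ?thesis by simp
qed

lemma prod_one_minus_le_exp:
  fixes x :: "'a \<Rightarrow> real"
  assumes "\<And>i. i \<in> I \<Longrightarrow> 0 \<le> x i" "\<And>i. i \<in> I \<Longrightarrow> x i \<le> 1"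
  shows "(\<Prod>i\<in>I. 1 - x i) \<le> exp (- (\<Sum>i\<in>I. x i))"
proof (cases "finite I")
  case True
  have "(\<Prod>i\<in>I. 1 - x i) \<le> (\<Prod>i\<in>I. exp (- x i))"
  proof (intro prod_mono conjI)
    fix i assume "i \<in> I"
    show "0 \<le> 1 - x i" using assms(2)[OF \<open>i \<in> I\<close>] by simp
    show "1 - x i \<le> exp (- x i)" using exp_ge_add_one_self[of "- x i"] by simp
  qed
  also have "\<dots> = exp (- (\<Sum>i\<in>I. x i))"
    using True by (simp add: exp_sum sum_negf[symmetric])
  finally show ?thesis .
qed simp

lemma exp_minus_less_half:
  fixes x :: real
  assumes "1 < x"
  shows "exp (- x) < 1/2"
proof -
  have "2 < exp (1 :: real)"
    using exp_1_gt_powr[of 1] by simp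
  also have "\<dots> < exp x"
    using assms by simp
  finally show ?thesis
    by (simp add: exp_minus field_simps)
qed

lemma sub_one_div_square_le:
  fixes s E P :: real
  assumes "1 < s" "s * s \<le> E" "E \<le> s + s * P * E"
  shows "(s - 1) / (s * s) \<le> P"
proof (rule ccontr)
  assume "\<not> ?thesis"
  then have less: "s * s * P < s - 1"
    using assms(1) by (simp add: not_le less_divide_eq mult.commute)
  then have "s * (s * P) < s * 1"
    by (simp add: algebra_simps)
  then have "0 < 1 - s * P"
    using assms(1) by simp
  then have "s * s * (1 - s * P) \<le> E * (1 - s * P)"
    using assms(2) by (intro mult_right_mono) auto
  moreover have "s * (s * s * P) < s * (s - 1)"
    using less assms(1) by (intro mult_strict_left_mono) auto
  ultimately show False
    using assms(3) by (simp add: algebra_simps)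
qed

lemma double_div_bounds:
  fixes l m :: nat
  assumes "0 < l" "l \<le> m"
  shows "2 \<le> real (2 * m div l)" "m \<le> l * real (2 * m div l)" "l * real (2 * m div l) \<le> 2 * m"
proof -
  have "2 * l div l \<le> 2 * m div l"
    using assms(2) by (intro div_le_mono) simp
  then show "2 \<le> real (2 * m div l)"
    using assms(1) by simp
  have "2 * m = l * (2 * m div l) + 2 * m mod l"
    by simp
  moreover have "2 * m mod l < l"
    using assms(1) by simp
  ultimately have "real m \<le> real (l * (2 * m div l))"
    using assms(2) by linarith
  then show "m \<le> l * real (2 * m div l)"
    by simp
  have "real (l * (2 * m div l)) \<le> real (2 * m)"
    by (simp only: of_nat_le_iff times_div_less_eq_dividend)
  then show "l * real (2 * m div l) \<le> 2 * m"
    by simp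
qed

lemma div_mult_ln_le:
  fixes lam :: real and l m :: nat
  assumes "2 \<le> lam" "m \<le> l * lam"
  shows "m / (lam * ln lam) \<le> 2 * l"
proof -
  have "ln 2 \<le> ln lam"
    using assms(1) by simp
  then have "1 \<le> 2 * ln lam"
    using ln2_ge_two_thirds by linarith
  then have "m \<le> (l * lam) * (2 * ln lam)"
    using assms mult_left_mono[of 1 "2 * ln lam" "l * lam"] by (simp add: mult_nonneg_nonneg)
  then show ?thesis
    using assms(1) by (simp add: divide_le_eq algebra_simps)
qed

lemma less_mult_sqrt_sub_one_div:
  fixes lam N :: real and l m :: nat
  assumes "2 \<le> lam" "l * lam \<le> 2 * m" "28/5 * m < N"
  shows "l < N * ((sqrt lam - 1) / lam)"
proof -
  have "7/5 \<le> sqrt lam"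
    using assms(1) by (intro real_le_rsqrt) (simp add: power2_eq_square)
  have "real l * 1 \<le> real l * (14/5 * (sqrt lam - 1))"
    using \<open>7/5 \<le> sqrt lam\<close> by (intro mult_left_mono) auto
  also have "\<dots> = 28/5 * (l * lam / 2) * ((sqrt lam - 1) / lam)"
    using assms(1) by (simp add: field_simps)
  also have "\<dots> \<le> 28/5 * m * ((sqrt lam - 1) / lam)"
    using assms(1,2) \<open>7/5 \<le> sqrt lam\<close> by (intro mult_right_mono) (auto simp: mult.commute)
  also have "\<dots> < N * ((sqrt lam - 1) / lam)"
    using assms(1,3) \<open>7/5 \<le> sqrt lam\<close> by (intro mult_strict_right_mono) auto
  finally show ?thesis
    by simp
qed

section \<open>The \<open>Top\<^sub>\<ell>\<close> norm\<close>

lemma sum_le_topl: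
  assumes "S \<subseteq> {..<m}" "card S = l"
  shows "sum x S \<le> topl m l x"
  unfolding topl_def using assms by (intro Max_ge) (auto intro: finite_subset[of _ "Pow {..<m}"])

lemma topl_le:
  assumes "l \<le> m" and "\<And>S. S \<subseteq> {..<m} \<Longrightarrow> card S = l \<Longrightarrow> sum x S \<le> B"
  shows "topl m l x \<le> B"
  unfolding topl_def
proof (subst Max_le_iff)
  show "finite ((\<lambda>S. sum x S) ` {S. S \<subseteq> {..<m} \<and> card S = l})"
    by (auto intro: finite_subset[of _ "Pow {..<m}"])
  have "{..<l} \<in> {S. S \<subseteq> {..<m} \<and> card S = l}"
    using assms(1) by auto
  then show "(\<lambda>S. sum x S) ` {S. S \<subseteq> {..<m} \<and> card S = l} \<noteq> {}"
    by blast
qed (use assms(2) in auto)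

lemma topl_cmult:
  assumes "l \<le> m" "0 < c"
  shows "topl m l (\<lambda>i. c * x i) = c * topl m l x"
proof (rule antisym)
  show "topl m l (\<lambda>i. c * x i) \<le> c * topl m l x"
    using assms
    by (intro topl_le) (auto simp: sum_distrib_left[symmetric] intro: mult_left_mono sum_le_topl)
  have "topl m l x \<le> topl m l (\<lambda>i. c * x i) / c"
  proof (rule topl_le[OF assms(1)])
    fix S assume "S \<subseteq> {..<m}" "card S = l"
    then have "c * sum x S \<le> topl m l (\<lambda>i. c * x i)"
      by (simp add: sum_distrib_left sum_le_topl)
    then show "sum x S \<le> topl m l (\<lambda>i. c * x i) / c"
      using assms(2) by (simp add: le_divide_eq mult.commute)
  qed
  then show "c * topl m l x \<le> topl m l (\<lambda>i. c * x i)"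
    using assms(2) by (simp add: le_divide_eq mult.commute)
qed

lemma abs_topl_le:
  assumes "l \<le> m"
  shows "\<bar>topl m l x\<bar> \<le> (\<Sum>i<m. \<bar>x i\<bar>)"
proof -
  have "topl m l x \<le> (\<Sum>i<m. \<bar>x i\<bar>)"
  proof (rule topl_le[OF assms])
    fix S assume "S \<subseteq> {..<m}"
    then have "sum x S \<le> (\<Sum>i\<in>S. \<bar>x i\<bar>) \<and> (\<Sum>i\<in>S. \<bar>x i\<bar>) \<le> (\<Sum>i<m. \<bar>x i\<bar>)"
      by (auto intro: sum_mono sum_mono2)
    then show "sum x S \<le> (\<Sum>i<m. \<bar>x i\<bar>)" by linarith
  qed
  moreover have "- (\<Sum>i<m. \<bar>x i\<bar>) \<le> topl m l x"
  proof -
    have "- (\<Sum>i<m. \<bar>x i\<bar>) \<le> - (\<Sum>i<l. \<bar>x i\<bar>)"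
      using assms by (simp add: sum_mono2)
    also have "\<dots> \<le> sum x {..<l}"
      by (simp add: sum_negf[symmetric] sum_mono)
    also have "\<dots> \<le> topl m l x"
      using assms by (intro sum_le_topl) auto
    finally show ?thesis .
  qed
  ultimately show ?thesis by linarith
qed

lemma borel_measurable_topl:
  assumes "\<And>i. i < m \<Longrightarrow> f i \<in> borel_measurable M"
  shows "(\<lambda>\<omega>. topl m l (\<lambda>i. f i \<omega>)) \<in> borel_measurable M"
  unfolding topl_def using assms
  by (intro borel_measurable_Max borel_measurable_sum)
     (auto intro: finite_subset[of _ "Pow {..<m}"])

lemma integrable_topl:
  assumes "l \<le> m" "\<And>i. i < m \<Longrightarrow> integrable M (f i)"
  shows "integrable M (\<lambda>\<omega>. topl m l (\<lambda>i. f i \<omega>))"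
proof (rule Bochner_Integration.integrable_bound)
  show "integrable M (\<lambda>\<omega>. \<Sum>i<m. \<bar>f i \<omega>\<bar>)"
    using assms(2) by auto
  show "(\<lambda>\<omega>. topl m l (\<lambda>i. f i \<omega>)) \<in> borel_measurable M"
    using assms(2) by (intro borel_measurable_topl) auto
  show "AE \<omega> in M. norm (topl m l (\<lambda>i. f i \<omega>)) \<le> norm (\<Sum>i<m. \<bar>f i \<omega>\<bar>)"
    using abs_topl_le[OF assms(1)] by (simp add: sum_nonneg)
qed

lemma topl_le_threshold:
  assumes "l \<le> m"
  shows "topl m l x \<le> l * a + (\<Sum>i<m. max 0 (x i - a))"
proof (rule topl_le[OF assms])
  fix S assume S: "S \<subseteq> {..<m}" "card S = l"
  have "sum x S \<le> (\<Sum>i\<in>S. a + max 0 (x i - a))"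
    by (intro sum_mono) auto
  also have "\<dots> \<le> l * a + (\<Sum>i<m. max 0 (x i - a))"
    using S by (simp add: sum.distrib sum_mono2)
  finally show "sum x S \<le> l * a + (\<Sum>i<m. max 0 (x i - a))" .
qed

lemma topl_le_sum_powr:
  fixes b :: real
  assumes "l \<le> m" "1 < b"
  shows "topl m l x \<le> l * a + (\<Sum>i<m. b powr x i / (b powr a * ln b))"
proof -
  have "max 0 (x i - a) \<le> b powr x i / (b powr a * ln b)" for i
    using max_0_le_powr_div_ln[OF assms(2), of "x i - a"]
    by (simp add: powr_diff divide_divide_eq_left)
  then show ?thesis
    using topl_le_threshold[OF assms(1), of x a] by (meson add_left_mono order_trans sum_mono)
qed

lemma exists_card_subset_or_superset:
  assumes "finite U" "C \<subseteq> U" "l \<le> card U"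
  shows "\<exists>S\<subseteq>U. card S = l \<and> (S \<subseteq> C \<or> C \<subseteq> S)"
proof (cases "l \<le> card C")
  case True
  then obtain S where "S \<subseteq> C" "card S = l"
    by (meson obtain_subset_with_card_n)
  then show ?thesis
    using assms(2) by blast
next
  case False
  have "l - card C \<le> card (U - C)"
    using assms by (simp add: card_Diff_subset finite_subset)
  then obtain T where T: "T \<subseteq> U - C" "card T = l - card C"
    by (meson obtain_subset_with_card_n)
  have "card (C \<union> T) = l"
    using T False assms by (subst card_Un_disjoint) (auto intro: finite_subset)
  then show ?thesis
    using T assms(2) by (intro exI[of _ "C \<union> T"]) auto
qed

lemma min_le_topl:
  fixes t :: real and n :: "nat \<Rightarrow> nat"
  assumes "l \<le> m" "0 \<le> t" and nonneg: "\<And>i. i < m \<Longrightarrow> 0 \<le> x i"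
    and count: "\<And>i. i < m \<Longrightarrow> t * n i \<le> x i"
  shows "t * min (\<Sum>i<m. n i) l \<le> topl m l x"
proof -
  define C where "C = {i. i < m \<and> 1 \<le> n i}"
  obtain S where S: "S \<subseteq> {..<m}" "card S = l" "S \<subseteq> C \<or> C \<subseteq> S"
    using exists_card_subset_or_superset[of "{..<m}" C l] assms(1) by (auto simp: C_def)
  have "t * min (\<Sum>i<m. n i) l \<le> sum x S"
  proof (cases "S \<subseteq> C")
    case True
    have "t * min (\<Sum>i<m. n i) l \<le> t * l"
      using \<open>0 \<le> t\<close> by (intro mult_left_mono) auto
    also have "\<dots> = (\<Sum>i\<in>S. t)"
      using S(2) by simp
    also have "\<dots> \<le> sum x S"
    proof (rule sum_mono)
      fix i assume "i \<in> S"
      then have "i < m" "1 \<le> real (n i)"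
        using True by (auto simp: C_def)
      then show "t \<le> x i"
        using count[of i] mult_left_mono[of 1 "n i" t] \<open>0 \<le> t\<close> by simp
    qed
    finally show ?thesis .
  next
    case False
    then have "C \<subseteq> S"
      using S(3) by blast
    have "t * min (\<Sum>i<m. n i) l \<le> t * (\<Sum>i<m. n i)"
      using \<open>0 \<le> t\<close> by (intro mult_left_mono) (simp_all only: of_nat_le_iff min.cobounded1)
    also have "\<dots> = (\<Sum>i<m. t * n i)"
      by (simp add: sum_distrib_left)
    also have "\<dots> = (\<Sum>i\<in>C. t * n i)"
      by (rule sum.mono_neutral_right) (auto simp: C_def)
    also have "\<dots> \<le> sum x C"
      using count by (intro sum_mono) (auto simp: C_def)
    also have "\<dots> \<le> sum x S"
      using \<open>C \<subseteq> S\<close> S(1) nonneg by (intro sum_mono2) (auto intro: finite_subset)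
    finally show ?thesis .
  qed
  also have "\<dots> \<le> topl m l x"
    using S(1,2) by (rule sum_le_topl)
  finally show ?thesis .
qed

section \<open>Bundles\<close>

lemma exists_subset_sum_between:
  fixes b :: "'a \<Rightarrow> real"
  assumes "finite G" "\<And>j. j \<in> G \<Longrightarrow> b j \<le> c" "1 \<le> sum b G"
  shows "\<exists>H\<subseteq>G. 1 \<le> sum b H \<and> sum b H \<le> 1 + c"
  using assms
proof (induction G rule: finite_induct)
  case (insert j G)
  show ?case
  proof (cases "1 \<le> sum b G")
    case True
    then obtain H where "H \<subseteq> G" "1 \<le> sum b H \<and> sum b H \<le> 1 + c"
      using insert.IH insert.prems(1) by auto
    then show ?thesis
      by (meson subset_insertI2)
  next
    case False
    then have "sum b (insert j G) \<le> 1 + c"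
      using insert.hyps insert.prems(1)[of j] by simp
    then show ?thesis
      using insert.prems(2) by blast
  qed
qed simp

lemma exists_bundles:
  fixes b :: "'a \<Rightarrow> real"
  assumes "finite G" "\<And>j. j \<in> G \<Longrightarrow> b j \<le> c"
  shows "\<exists>BB. BB \<subseteq> Pow G \<and> disjoint BB \<and> (\<forall>A\<in>BB. 1 \<le> sum b A) \<and> sum b G \<le> (1 + c) * card BB + 1"
  using assms
proof (induction G rule: finite_psubset_induct)
  case (psubset G)
  show ?case
  proof (cases "1 \<le> sum b G")
    case False
    then show ?thesis by (intro exI[of _ "{}"]) auto
  next
    case True
    then obtain H where H: "H \<subseteq> G" "1 \<le> sum b H" "sum b H \<le> 1 + c"
      using exists_subset_sum_between[OF psubset.hyps psubset.prems True] by blast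
    then have "H \<noteq> {}" by auto
    then have "G - H \<subset> G"
      using H(1) by blast
    then have "\<exists>BB. BB \<subseteq> Pow (G - H) \<and> disjoint BB \<and> (\<forall>A\<in>BB. 1 \<le> sum b A)
        \<and> sum b (G - H) \<le> (1 + c) * card BB + 1"
      by (rule psubset.IH) (use psubset.prems in auto)
    then obtain BB where BB: "BB \<subseteq> Pow (G - H)" "disjoint BB" "\<forall>A\<in>BB. 1 \<le> sum b A"
      "sum b (G - H) \<le> (1 + c) * card BB + 1"
      by blast
    have "finite BB"
      using BB(1) psubset.hyps by (auto intro: finite_subset[of _ "Pow G"])
    moreover have "H \<notin> BB"
      using BB(1) \<open>H \<noteq> {}\<close> by blast
    ultimately have "card (insert H BB) = card BB + 1"
      by simp
    moreover have "sum b G = sum b H + sum b (G - H)"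
      using H(1) psubset.hyps by (simp add: sum.subset_diff)
    ultimately have "sum b G \<le> (1 + c) * card (insert H BB) + 1"
      using H(3) BB(4) by (simp add: algebra_simps)
    moreover have "disjoint (insert H BB)"
      using BB(1,2) by (auto simp: pairwise_insert disjnt_def)
    moreover have "insert H BB \<subseteq> Pow G"
      using BB(1) H(1) by blast
    ultimately show ?thesis
      using H(2) BB(3) by blast
  qed
qed

lemma disjoint_family_on_snd_Sigma:
  assumes "disjoint_family_on G I" "\<And>i. i \<in> I \<Longrightarrow> BB i \<subseteq> Pow (G i)"
    "\<And>i. i \<in> I \<Longrightarrow> disjoint (BB i)"
  shows "disjoint_family_on snd (SIGMA i:I. BB i)"
  unfolding disjoint_family_on_def
proof (intro ballI impI)
  fix k k' assume "k \<in> Sigma I BB" "k' \<in> Sigma I BB" "k \<noteq> k'"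
  then obtain i A i' A' where k: "k = (i, A)" "k' = (i', A')" "i \<in> I" "i' \<in> I"
    "A \<in> BB i" "A' \<in> BB i'"
    by (cases k, cases k') auto
  show "snd k \<inter> snd k' = {}"
  proof (cases "i = i'")
    case True
    then show ?thesis
      using assms(3)[OF k(3)] k \<open>k \<noteq> k'\<close> by (auto simp: pairwise_def disjnt_def)
  next
    case False
    then have "G i \<inter> G i' = {}"
      using assms(1) k(3,4) by (auto simp: disjoint_family_on_def)
    then show ?thesis
      using assms(2) k by auto
  qed
qed

section \<open>Sums of independent small jobs\<close>

locale small_jobs = prob_space M for M :: "'a measure" +
  fixes Z :: "'j \<Rightarrow> 'a \<Rightarrow> real" and J :: "'j set" and lam :: real
  assumes finite_J: "finite J"
    and indep_Z: "indep_vars (\<lambda>_. borel) Z J"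
    and Z_nonneg: "\<And>j \<omega>. j \<in> J \<Longrightarrow> \<omega> \<in> space M \<Longrightarrow> 0 \<le> Z j \<omega>"
    and Z_le: "\<And>j \<omega>. j \<in> J \<Longrightarrow> \<omega> \<in> space M \<Longrightarrow> Z j \<omega> \<le> 1/4"
    and lam_gt_1: "1 < lam"
begin

definition total :: "'j set \<Rightarrow> 'a \<Rightarrow> real" where
  "total G \<omega> = (\<Sum>j\<in>G. Z j \<omega>)"

definition heavy :: "'j set \<Rightarrow> 'a set" where
  "heavy G = {\<omega> \<in> space M. 1/4 \<le> total G \<omega>}"

lemma measurable_Z [measurable]: "j \<in> J \<Longrightarrow> Z j \<in> borel_measurable M"
  using indep_Z by (auto simp: indep_vars_def)

lemma measurable_total [measurable]: "G \<subseteq> J \<Longrightarrow> total G \<in> borel_measurable M"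
  unfolding total_def by (intro borel_measurable_sum) auto

lemma sets_heavy [measurable]: "G \<subseteq> J \<Longrightarrow> heavy G \<in> sets M"
  unfolding heavy_def by measurable

lemma finite_subset_J: "G \<subseteq> J \<Longrightarrow> finite G"
  using finite_J finite_subset by blast

lemma finite_bundles: "G \<subseteq> J \<Longrightarrow> BB \<subseteq> Pow G \<Longrightarrow> finite BB"
  using finite_subset_J by (meson finite_Pow_iff finite_subset)

lemma finite_machine_bundles:
  fixes m :: nat
  assumes "\<And>i. i < m \<Longrightarrow> G i \<subseteq> J" "\<And>i. i < m \<Longrightarrow> BB i \<subseteq> Pow (G i)"
  shows "finite (SIGMA i:{..<m}. BB i)"
proof (intro finite_SigmaI ballI)
  fix i assume "i \<in> {..<m}"
  then show "finite (BB i)"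
    using assms[of i] by (intro finite_bundles[of "G i"]) auto
qed simp

lemma total_insert: "finite G \<Longrightarrow> j \<notin> G \<Longrightarrow> total (insert j G) \<omega> = Z j \<omega> + total G \<omega>"
  by (simp add: total_def)

lemma total_nonneg: "G \<subseteq> J \<Longrightarrow> \<omega> \<in> space M \<Longrightarrow> 0 \<le> total G \<omega>"
  unfolding total_def using Z_nonneg by (auto intro: sum_nonneg)

lemma total_le_card: "G \<subseteq> J \<Longrightarrow> \<omega> \<in> space M \<Longrightarrow> total G \<omega> \<le> card G"
  unfolding total_def using Z_le sum_mono[of G "\<lambda>j. Z j \<omega>" "\<lambda>_. 1"] by fastforce

lemma indicator_heavy:
  "\<omega> \<in> space M \<Longrightarrow> indicator (heavy G) \<omega> = (if 1/4 \<le> total G \<omega> then 1 else 0 :: real)"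
  by (simp add: heavy_def)

lemma integrable_total: "G \<subseteq> J \<Longrightarrow> integrable M (total G)"
  by (rule integrable_const_bound[where B = "card G"]) (use total_nonneg total_le_card in auto)

lemma integrable_powr_total: "G \<subseteq> J \<Longrightarrow> integrable M (\<lambda>\<omega>. lam powr total G \<omega>)"
  by (rule integrable_const_bound[where B = "lam powr card G"])
     (use total_le_card lam_gt_1 in \<open>auto intro: powr_mono\<close>)

lemma integrable_powr_Z: "j \<in> J \<Longrightarrow> integrable M (\<lambda>\<omega>. lam powr Z j \<omega>)"
  using integrable_powr_total[of "{j}"] by (simp add: total_def)

lemma expectation_powr_Z_bounds:
  assumes "j \<in> J"
  shows "1 \<le> (\<integral>\<omega>. lam powr Z j \<omega> \<partial>M)" "(\<integral>\<omega>. lam powr Z j \<omega> \<partial>M) \<le> lam powr (1/4)"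
proof -
  have "(\<integral>\<omega>. 1 \<partial>M) \<le> (\<integral>\<omega>. lam powr Z j \<omega> \<partial>M)"
    using assms Z_nonneg lam_gt_1
    by (intro integral_mono integrable_powr_Z) (auto intro: ge_one_powr_ge_zero)
  then show "1 \<le> (\<integral>\<omega>. lam powr Z j \<omega> \<partial>M)"
    by (simp add: prob_space)
  have "(\<integral>\<omega>. lam powr Z j \<omega> \<partial>M) \<le> (\<integral>\<omega>. lam powr (1/4) \<partial>M)"
    using assms Z_le lam_gt_1 by (intro integral_mono integrable_powr_Z) (auto intro: powr_mono)
  then show "(\<integral>\<omega>. lam powr Z j \<omega> \<partial>M) \<le> lam powr (1/4)"
    by (simp add: prob_space)
qed

lemma expectation_powr_Z: "j \<in> J \<Longrightarrow> (\<integral>\<omega>. lam powr Z j \<omega> \<partial>M) = lam powr eff_size M lam (Z j)"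
  using expectation_powr_Z_bounds(1)[of j] lam_gt_1 by (simp add: eff_size_def)

lemma eff_size_bounds:
  assumes "j \<in> J"
  shows "0 \<le> eff_size M lam (Z j)" "eff_size M lam (Z j) \<le> 1/4"
proof -
  have "lam powr 0 \<le> lam powr eff_size M lam (Z j)" "lam powr eff_size M lam (Z j) \<le> lam powr (1/4)"
    using expectation_powr_Z_bounds[OF assms] expectation_powr_Z[OF assms] by simp_all
  then show "0 \<le> eff_size M lam (Z j)" "eff_size M lam (Z j) \<le> 1/4"
    using lam_gt_1 by (simp_all only: powr_le_cancel_iff)
qed

lemma expectation_powr_total:
  assumes "G \<subseteq> J"
  shows "(\<integral>\<omega>. lam powr total G \<omega> \<partial>M) = lam powr (\<Sum>j\<in>G. eff_size M lam (Z j))"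
proof -
  have "indep_vars (\<lambda>_. borel) (\<lambda>j \<omega>. lam powr Z j \<omega>) G"
    by (rule indep_vars_compose2[OF indep_vars_subset[OF indep_Z assms]]) measurable
  then have "(\<integral>\<omega>. (\<Prod>j\<in>G. lam powr Z j \<omega>) \<partial>M) = (\<Prod>j\<in>G. \<integral>\<omega>. lam powr Z j \<omega> \<partial>M)"
    using assms finite_subset_J integrable_powr_Z by (intro indep_vars_lebesgue_integral) auto
  then show ?thesis
    using assms lam_gt_1 by (simp add: total_def powr_sum expectation_powr_Z subset_iff)
qed

lemma indep_vars_total:
  assumes "disjoint_family_on S K" "\<And>k. k \<in> K \<Longrightarrow> S k \<subseteq> J"
  shows "indep_vars (\<lambda>_. borel) (\<lambda>k. total (S k)) K"
proof -
  have "indep_vars (\<lambda>k. PiM (S k) (\<lambda>_. borel)) (\<lambda>k \<omega>. restrict (\<lambda>j. Z j \<omega>) (S k)) K"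
    using indep_vars_restrict[OF indep_Z] assms by blast
  then have "indep_vars (\<lambda>_. borel) (\<lambda>k \<omega>. \<Sum>j\<in>S k. restrict (\<lambda>j. Z j \<omega>) (S k) j) K"
    by (rule indep_vars_compose2) measurable
  then show ?thesis
    by (simp add: total_def[abs_def])
qed

lemma
  assumes "G \<subseteq> J" "j \<in> J" "j \<notin> G" "g \<in> borel_measurable borel"
    and "integrable M (\<lambda>\<omega>. g (total G \<omega>))"
  shows integrable_powr_Z_mult: "integrable M (\<lambda>\<omega>. lam powr Z j \<omega> * g (total G \<omega>))"
    and expectation_powr_Z_mult: "(\<integral>\<omega>. lam powr Z j \<omega> * g (total G \<omega>) \<partial>M)
       = (\<integral>\<omega>. lam powr Z j \<omega> \<partial>M) * (\<integral>\<omega>. g (total G \<omega>) \<partial>M)"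
proof -
  have "indep_var borel (Z j) borel (total G)"
    using indep_vars_sum[OF finite_subset_J[OF assms(1)] assms(3) indep_vars_subset[OF indep_Z]] assms
    by (simp add: total_def[abs_def])
  then have "indep_var borel ((\<lambda>x. lam powr x) \<circ> Z j) borel (g \<circ> total G)"
    by (rule indep_var_compose) (use assms(4) in measurable)
  then show "integrable M (\<lambda>\<omega>. lam powr Z j \<omega> * g (total G \<omega>))"
    and "(\<integral>\<omega>. lam powr Z j \<omega> * g (total G \<omega>) \<partial>M)
       = (\<integral>\<omega>. lam powr Z j \<omega> \<partial>M) * (\<integral>\<omega>. g (total G \<omega>) \<partial>M)"
    using assms(2,5) integrable_powr_Z
    by (auto simp: comp_def dest: indep_var_integrable indep_var_lebesgue_integral)
qed

lemma expectation_indicator_heavy: "G \<subseteq> J \<Longrightarrow> (\<integral>\<omega>. indicator (heavy G) \<omega> \<partial>M) = prob (heavy G)"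
  by (simp add: heavy_def Int_absorb2)

lemma integrable_indicator_heavy: "G \<subseteq> J \<Longrightarrow> integrable M (indicator (heavy G) :: 'a \<Rightarrow> real)"
  by (intro integrable_real_indicator) (auto simp: less_top[symmetric])

lemma one_le_expectation_powr_total: "G \<subseteq> J \<Longrightarrow> 1 \<le> (\<integral>\<omega>. lam powr total G \<omega> \<partial>M)"
  using expectation_powr_total eff_size_bounds lam_gt_1
  by (auto intro!: ge_one_powr_ge_zero sum_nonneg)

lemma integrable_powr_total_heavy:
  "G \<subseteq> J \<Longrightarrow> integrable M (\<lambda>\<omega>. lam powr total G \<omega> * indicator (heavy G) \<omega>)"
  by (intro integrable_real_mult_indicator integrable_powr_total) auto

lemma expectation_powr_total_insert:
  assumes "G \<subseteq> J" "j \<in> J" "j \<notin> G"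
  shows "(\<integral>\<omega>. lam powr total (insert j G) \<omega> \<partial>M)
       = (\<integral>\<omega>. lam powr Z j \<omega> \<partial>M) * (\<integral>\<omega>. lam powr total G \<omega> \<partial>M)"
  using expectation_powr_Z_mult[OF assms, of "\<lambda>y. lam powr y"] integrable_powr_total[OF assms(1)]
    finite_subset_J[OF assms(1)] assms(3) lam_gt_1
  by (simp add: total_insert powr_add)

text \<open>While \<open>G\<close> is not heavy, adding one job keeps its total at most \<open>1/2\<close>; so on the event
  that \<open>insert j G\<close> has just become heavy, \<open>lam powr total\<close> is at most \<open>sqrt lam\<close>.\<close>
lemma powr_total_heavy_insert_le:
  assumes "j \<in> J" "j \<notin> G" "finite G" "\<omega> \<in> space M"
  shows "lam powr total (insert j G) \<omega> * indicator (heavy (insert j G)) \<omega>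
      \<le> lam powr Z j \<omega> * (lam powr total G \<omega> * indicator (heavy G) \<omega>)
        + sqrt lam * (indicator (heavy (insert j G)) \<omega> - indicator (heavy G) \<omega>)"
proof (cases "1/4 \<le> total G \<omega>")
  case True
  moreover have "total G \<omega> \<le> total (insert j G) \<omega>"
    using assms Z_nonneg by (simp add: total_insert)
  ultimately show ?thesis
    using assms by (simp add: indicator_heavy total_insert powr_add)
next
  case False
  then have "total (insert j G) \<omega> \<le> 1/2"
    using Z_le[OF assms(1,4)] total_insert[OF assms(3,2), of \<omega>] by linarith
  then have "lam powr total (insert j G) \<omega> \<le> sqrt lam"
    using lam_gt_1 powr_mono[of "total (insert j G) \<omega>" "1/2" lam] by (simp add: powr_half_sqrt)
  with False show ?thesis
    using assms by (simp add: indicator_heavy)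
qed

lemma expectation_powr_total_heavy_insert_le:
  assumes "G \<subseteq> J" "j \<in> J" "j \<notin> G"
  shows "(\<integral>\<omega>. lam powr total (insert j G) \<omega> * indicator (heavy (insert j G)) \<omega> \<partial>M)
      \<le> (\<integral>\<omega>. lam powr Z j \<omega> \<partial>M) * (\<integral>\<omega>. lam powr total G \<omega> * indicator (heavy G) \<omega> \<partial>M)
        + sqrt lam * (prob (heavy (insert j G)) - prob (heavy G))"
proof -
  define g where "g y = lam powr y * (if 1/4 \<le> y then 1 else 0)" for y
  have g: "lam powr total G \<omega> * indicator (heavy G) \<omega> = g (total G \<omega>)" if "\<omega> \<in> space M" for \<omega>
    using that by (simp add: g_def indicator_heavy)
  have "g \<in> borel_measurable borel"
    unfolding g_def by measurable
  have "integrable M (\<lambda>\<omega>. g (total G \<omega>))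
      \<longleftrightarrow> integrable M (\<lambda>\<omega>. lam powr total G \<omega> * indicator (heavy G) \<omega>)"
    by (rule Bochner_Integration.integrable_cong) (simp_all add: g)
  then have "integrable M (\<lambda>\<omega>. g (total G \<omega>))"
    using integrable_powr_total_heavy[OF assms(1)] by simp
  note factor = integrable_powr_Z_mult[OF assms \<open>g \<in> borel_measurable borel\<close> this]
    expectation_powr_Z_mult[OF assms \<open>g \<in> borel_measurable borel\<close> this]
  have "insert j G \<subseteq> J"
    using assms by simp
  then have "(\<integral>\<omega>. lam powr total (insert j G) \<omega> * indicator (heavy (insert j G)) \<omega> \<partial>M)
      \<le> (\<integral>\<omega>. lam powr Z j \<omega> * g (total G \<omega>)
        + sqrt lam * (indicator (heavy (insert j G)) \<omega> - indicator (heavy G) \<omega>) \<partial>M)"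
    using powr_total_heavy_insert_le[OF assms(2,3) finite_subset_J[OF assms(1)]] factor(1)
      assms(1) g
    by (intro integral_mono integrable_powr_total_heavy Bochner_Integration.integrable_add
        integrable_mult_right Bochner_Integration.integrable_diff integrable_indicator_heavy) simp_all
  also have "\<dots> = (\<integral>\<omega>. lam powr Z j \<omega> \<partial>M) * (\<integral>\<omega>. lam powr total G \<omega> * indicator (heavy G) \<omega> \<partial>M)
        + sqrt lam * (prob (heavy (insert j G)) - prob (heavy G))"
    using factor assms \<open>insert j G \<subseteq> J\<close> integrable_powr_total_heavy[OF assms(1)]
    by (simp add: g integrable_indicator_heavy expectation_indicator_heavy
        cong: Bochner_Integration.integral_cong)
  finally show ?thesis .
qed

lemma expectation_powr_total_heavy_le:
  assumes "G \<subseteq> J"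
  shows "(\<integral>\<omega>. lam powr total G \<omega> * indicator (heavy G) \<omega> \<partial>M)
       \<le> sqrt lam * prob (heavy G) * (\<integral>\<omega>. lam powr total G \<omega> \<partial>M)"
  using finite_subset_J[OF assms] assms
proof (induction G rule: finite_induct)
  case empty
  then show ?case
    by (simp add: heavy_def total_def)
next
  case (insert j G)
  define E where "E H = (\<integral>\<omega>. lam powr total H \<omega> \<partial>M)" for H
  define EH where "EH H = (\<integral>\<omega>. lam powr total H \<omega> * indicator (heavy H) \<omega> \<partial>M)" for H
  define P where "P H = prob (heavy H)" for H
  define EZ where "EZ = (\<integral>\<omega>. lam powr Z j \<omega> \<partial>M)"
  have G: "G \<subseteq> J" "j \<in> J" "insert j G \<subseteq> J"
    using insert.prems by auto
  have "EH (insert j G) \<le> EZ * EH G + sqrt lam * (P (insert j G) - P G)"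
    using expectation_powr_total_heavy_insert_le[OF G(1,2) insert.hyps(2)]
    by (simp add: EH_def EZ_def P_def)
  also have "EZ * EH G \<le> sqrt lam * P G * E (insert j G)"
  proof -
    have "EH G \<le> sqrt lam * P G * E G"
      using insert.IH G(1) by (simp add: EH_def P_def E_def)
    moreover have "0 \<le> EZ"
      using expectation_powr_Z_bounds(1)[OF G(2)] by (simp add: EZ_def)
    moreover have "E (insert j G) = EZ * E G"
      using expectation_powr_total_insert[OF G(1,2) insert.hyps(2)] by (simp add: E_def EZ_def)
    ultimately show ?thesis
      by (simp add: mult_left_mono algebra_simps)
  qed
  also have "sqrt lam * (P (insert j G) - P G) \<le> sqrt lam * (P (insert j G) - P G) * E (insert j G)"
  proof -
    have "heavy G \<subseteq> heavy (insert j G)"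
      using insert.hyps Z_nonneg[OF G(2)] by (auto simp: heavy_def total_insert add_increasing)
    then have "P G \<le> P (insert j G)"
      using G by (auto simp: P_def intro: finite_measure_mono)
    then show ?thesis
      using one_le_expectation_powr_total[OF G(3)] lam_gt_1
        mult_left_mono[of 1 "E (insert j G)" "sqrt lam * (P (insert j G) - P G)"]
      by (simp add: E_def)
  qed
  finally show ?case
    by (simp add: EH_def P_def E_def algebra_simps)
qed

lemma prob_heavy_ge:
  assumes "G \<subseteq> J" "1 \<le> (\<Sum>j\<in>G. eff_size M lam (Z j))"
  shows "(sqrt lam - 1) / lam \<le> prob (heavy G)"
proof -
  define E where "E = (\<integral>\<omega>. lam powr total G \<omega> \<partial>M)"
  have "lam \<le> E"
    using lam_gt_1 powr_mono[OF assms(2), of lam]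
    by (simp add: E_def expectation_powr_total[OF assms(1)])
  have "lam powr total G \<omega> \<le> sqrt lam + lam powr total G \<omega> * indicator (heavy G) \<omega>"
    if "\<omega> \<in> space M" for \<omega>
  proof (cases "1/4 \<le> total G \<omega>")
    case False
    then have "lam powr total G \<omega> \<le> lam powr (1/2)"
      using lam_gt_1 by (intro powr_mono) auto
    then show ?thesis
      using lam_gt_1 that False by (simp add: powr_half_sqrt indicator_heavy)
  qed (use that lam_gt_1 in \<open>simp add: indicator_heavy\<close>)
  then have "E \<le> (\<integral>\<omega>. sqrt lam + lam powr total G \<omega> * indicator (heavy G) \<omega> \<partial>M)"
    unfolding E_def using assms(1)
    by (intro integral_mono Bochner_Integration.integrable_add integrable_const
        integrable_powr_total_heavy integrable_powr_total) auto
  also have "\<dots> \<le> sqrt lam + sqrt lam * prob (heavy G) * E"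
    using expectation_powr_total_heavy_le[OF assms(1)] integrable_powr_total_heavy[OF assms(1)]
    by (simp add: prob_space E_def)
  finally show ?thesis
    using sub_one_div_square_le[of "sqrt lam" E "prob (heavy G)"] \<open>lam \<le> E\<close> lam_gt_1 by simp
qed

lemma expectation_topl_total_le:
  assumes "l \<le> m" and G: "\<And>i. i < m \<Longrightarrow> G i \<subseteq> J"
    and \<alpha>: "\<And>i. i < m \<Longrightarrow> (\<Sum>j\<in>G i. eff_size M lam (Z j)) \<le> \<alpha>"
  shows "(\<integral>\<omega>. topl m l (\<lambda>i. total (G i) \<omega>) \<partial>M) \<le> l * (\<alpha> + 1) + m / (lam * ln lam)"
proof -
  define c where "c = lam powr (\<alpha> + 1) * ln lam"
  have int: "integrable M (\<lambda>\<omega>. lam powr total (G i) \<omega> / c)" if "i \<in> {..<m}" for i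
    using that G integrable_powr_total by auto
  have "(\<integral>\<omega>. topl m l (\<lambda>i. total (G i) \<omega>) \<partial>M)
      \<le> (\<integral>\<omega>. l * (\<alpha> + 1) + (\<Sum>i<m. lam powr total (G i) \<omega> / c) \<partial>M)"
    using assms(1) G int integrable_total topl_le_sum_powr[OF assms(1) lam_gt_1]
    by (intro integral_mono integrable_topl Bochner_Integration.integrable_add integrable_const
        Bochner_Integration.integrable_sum) (auto simp: c_def)
  also have "\<dots> = l * (\<alpha> + 1) + (\<Sum>i<m. (\<integral>\<omega>. lam powr total (G i) \<omega> \<partial>M) / c)"
  proof -
    have "(\<integral>\<omega>. (\<Sum>i<m. lam powr total (G i) \<omega> / c) \<partial>M)
        = (\<Sum>i<m. (\<integral>\<omega>. lam powr total (G i) \<omega> \<partial>M) / c)"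
      using int by (subst Bochner_Integration.integral_sum) auto
    with int show ?thesis
      by (subst Bochner_Integration.integral_add) (auto simp: prob_space)
  qed
  also have "\<dots> \<le> l * (\<alpha> + 1) + (\<Sum>i<m. 1 / (lam * ln lam))"
  proof (intro add_left_mono sum_mono)
    fix i assume "i \<in> {..<m}"
    then have "(\<integral>\<omega>. lam powr total (G i) \<omega> \<partial>M) \<le> lam powr \<alpha>"
      using G \<alpha> lam_gt_1 by (simp add: expectation_powr_total)
    then show "(\<integral>\<omega>. lam powr total (G i) \<omega> \<partial>M) / c \<le> 1 / (lam * ln lam)"
      using lam_gt_1 by (simp add: c_def powr_add field_simps)
  qed
  finally show ?thesis
    by simp
qed

lemma sum_total_le_total:
  assumes "G \<subseteq> J" "BB \<subseteq> Pow G" "disjoint BB" "\<omega> \<in> space M"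
  shows "(\<Sum>A\<in>BB. total A \<omega>) \<le> total G \<omega>"
proof -
  have fin: "finite G" "\<forall>A\<in>BB. finite A"
    using assms(1,2) finite_subset_J by (auto intro: finite_subset)
  have "(\<Sum>A\<in>BB. total A \<omega>) = total (\<Union>BB) \<omega>"
    unfolding total_def using fin assms(3)
    by (subst sum.Union_disjoint) (auto simp: pairwise_def disjnt_def)
  also have "\<dots> \<le> total G \<omega>"
    unfolding total_def using assms Z_nonneg fin by (intro sum_mono2) auto
  finally show ?thesis .
qed

lemma min_card_heavy_le_topl:
  assumes "l \<le> m" "\<omega> \<in> space M" and G: "\<And>i. i < m \<Longrightarrow> G i \<subseteq> J"
    and BB: "\<And>i. i < m \<Longrightarrow> BB i \<subseteq> Pow (G i)" "\<And>i. i < m \<Longrightarrow> disjoint (BB i)"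
  shows "min (card {k \<in> (SIGMA i:{..<m}. BB i). \<omega> \<in> heavy (snd k)}) l / 4
       \<le> topl m l (\<lambda>i. total (G i) \<omega>)"
proof -
  define n where "n i = card {A \<in> BB i. \<omega> \<in> heavy A}" for i
  have fin: "finite (BB i)" if "i < m" for i
    using G[OF that] BB(1)[OF that] by (rule finite_bundles)
  have "1/4 * n i \<le> total (G i) \<omega>" if "i < m" for i
  proof -
    have "1/4 * n i = (\<Sum>A\<in>{A \<in> BB i. \<omega> \<in> heavy A}. 1/4)"
      by (simp add: n_def)
    also have "\<dots> \<le> (\<Sum>A\<in>{A \<in> BB i. \<omega> \<in> heavy A}. total A \<omega>)"
      by (intro sum_mono) (simp add: heavy_def)
    also have "\<dots> \<le> total (G i) \<omega>"
      using BB[OF that] by (intro sum_total_le_total G that assms(2)) (auto intro: pairwise_subset)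
    finally show ?thesis .
  qed
  then have "1/4 * min (\<Sum>i<m. n i) l \<le> topl m l (\<lambda>i. total (G i) \<omega>)"
    using assms G total_nonneg by (intro min_le_topl) auto
  moreover have "{k \<in> (SIGMA i:{..<m}. BB i). \<omega> \<in> heavy (snd k)}
      = (SIGMA i:{..<m}. {A \<in> BB i. \<omega> \<in> heavy A})"
    by auto
  then have "card {k \<in> (SIGMA i:{..<m}. BB i). \<omega> \<in> heavy (snd k)} = (\<Sum>i<m. n i)"
    using fin by (simp add: n_def)
  ultimately show ?thesis
    by simp
qed

lemma expectation_prod_heavy_le_exp:
  fixes c :: real
  assumes "finite K" "disjoint_family_on S K" "\<And>k. k \<in> K \<Longrightarrow> S k \<subseteq> J" "0 \<le> c" "c \<le> 1"
  shows "(\<integral>\<omega>. (\<Prod>k\<in>K. 1 - c * indicator (heavy (S k)) \<omega>) \<partial>M)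
       \<le> exp (- c * (\<Sum>k\<in>K. prob (heavy (S k))))"
proof -
  define f where "f y = 1 - c * (if 1/4 \<le> y then 1 else 0)" for y :: real
  have f: "1 - c * indicator (heavy G) \<omega> = f (total G \<omega>)" if "\<omega> \<in> space M" for G \<omega>
    using that by (simp add: f_def indicator_heavy)
  have "f \<in> borel_measurable borel"
    unfolding f_def by measurable
  then have "indep_vars (\<lambda>_. borel) (\<lambda>k \<omega>. f (total (S k) \<omega>)) K"
    by (intro indep_vars_compose2[OF indep_vars_total[OF assms(2,3)]])
  moreover have "integrable M (\<lambda>\<omega>. f (total (S k) \<omega>))" if "k \<in> K" for k
  proof -
    have "integrable M (\<lambda>\<omega>. f (total (S k) \<omega>))
        \<longleftrightarrow> integrable M (\<lambda>\<omega>. 1 - c * indicator (heavy (S k)) \<omega>)"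
      by (rule Bochner_Integration.integrable_cong) (simp_all add: f)
    then show ?thesis
      using that assms(3) integrable_indicator_heavy by simp
  qed
  ultimately have "(\<integral>\<omega>. (\<Prod>k\<in>K. f (total (S k) \<omega>)) \<partial>M) = (\<Prod>k\<in>K. \<integral>\<omega>. f (total (S k) \<omega>) \<partial>M)"
    using assms(1) by (intro indep_vars_lebesgue_integral) auto
  then have "(\<integral>\<omega>. (\<Prod>k\<in>K. 1 - c * indicator (heavy (S k)) \<omega>) \<partial>M)
      = (\<Prod>k\<in>K. 1 - c * prob (heavy (S k)))"
    using assms(3) integrable_indicator_heavy
    by (simp add: f[symmetric] expectation_indicator_heavy prob_space
        cong: Bochner_Integration.integral_cong)
  also have "\<dots> \<le> exp (- (\<Sum>k\<in>K. c * prob (heavy (S k))))"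
    using assms(4,5) by (intro prod_one_minus_le_exp) (auto simp: mult_le_one)
  finally show ?thesis
    by (simp add: sum_distrib_left sum_negf)
qed

lemma integrable_prod_heavy:
  fixes c :: real
  assumes "finite K" "\<And>k. k \<in> K \<Longrightarrow> S k \<subseteq> J" "0 \<le> c" "c \<le> 1"
  shows "integrable M (\<lambda>\<omega>. \<Prod>k\<in>K. 1 - c * indicator (heavy (S k)) \<omega>)"
proof (rule integrable_const_bound[where B = 1])
  show "AE \<omega> in M. norm (\<Prod>k\<in>K. 1 - c * indicator (heavy (S k)) \<omega>) \<le> 1"
    using assms(3,4) by (simp add: prod_one_minus_indicator[OF assms(1)] power_le_one)
  show "(\<lambda>\<omega>. \<Prod>k\<in>K. 1 - c * indicator (heavy (S k)) \<omega>) \<in> borel_measurable M"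
    using assms(2) by (intro borel_measurable_prod) measurable
qed

lemma topl_total_ge_prod_heavy:
  assumes "1 \<le> l" "l \<le> m" "\<omega> \<in> space M" and G: "\<And>i. i < m \<Longrightarrow> G i \<subseteq> J"
    and BB: "\<And>i. i < m \<Longrightarrow> BB i \<subseteq> Pow (G i)" "\<And>i. i < m \<Longrightarrow> disjoint (BB i)"
  defines "K \<equiv> SIGMA i:{..<m}. BB i"
  shows "l / 4 * (1 - (\<Prod>k\<in>K. 1 - 1 / l * indicator (heavy (snd k)) \<omega>))
       \<le> topl m l (\<lambda>i. total (G i) \<omega>)"
proof -
  have "finite K"
    unfolding K_def using G BB(1) by (rule finite_machine_bundles)
  then have "l / 4 * (1 - (\<Prod>k\<in>K. 1 - 1 / l * indicator (heavy (snd k)) \<omega>))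
      = l / 4 * (1 - (1 - 1 / l) ^ card {k \<in> K. \<omega> \<in> heavy (snd k)})"
    by (simp only: prod_one_minus_indicator)
  also have "\<dots> \<le> min (card {k \<in> K. \<omega> \<in> heavy (snd k)}) l / 4"
    using mult_one_minus_power_le_min[of l "card {k \<in> K. \<omega> \<in> heavy (snd k)}"] assms(1)
    by (simp add: of_nat_min)
  also have "\<dots> \<le> topl m l (\<lambda>i. total (G i) \<omega>)"
    unfolding K_def using assms(2,3) G BB by (rule min_card_heavy_le_topl)
  finally show ?thesis .
qed

lemma expectation_topl_ge_bundles:
  assumes "1 \<le> l" "l \<le> m" and G: "disjoint_family_on G {..<m}" "\<And>i. i < m \<Longrightarrow> G i \<subseteq> J"
    and BB: "\<And>i. i < m \<Longrightarrow> BB i \<subseteq> Pow (G i)" "\<And>i. i < m \<Longrightarrow> disjoint (BB i)"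
  defines "K \<equiv> SIGMA i:{..<m}. BB i"
  shows "l / 4 * (1 - exp (- (\<Sum>k\<in>K. prob (heavy (snd k))) / l))
       \<le> (\<integral>\<omega>. topl m l (\<lambda>i. total (G i) \<omega>) \<partial>M)"
proof -
  define P where "P \<omega> = (\<Prod>k\<in>K. 1 - 1 / l * indicator (heavy (snd k)) \<omega>)" for \<omega>
  have c: "0 \<le> 1 / real l" "1 / real l \<le> 1"
    using assms(1) by auto
  have "finite K"
    unfolding K_def using G(2) BB(1) by (rule finite_machine_bundles)
  have K_sub: "snd k \<subseteq> J" if "k \<in> K" for k
  proof -
    from that obtain i A where "k = (i, A)" "i < m" "A \<in> BB i"
      unfolding K_def by auto
    then show ?thesis
      using BB(1)[of i] G(2)[of i] by auto
  qed
  have "integrable M P"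
    unfolding P_def using \<open>finite K\<close> K_sub c by (rule integrable_prod_heavy)
  moreover have "l / 4 * (1 - P \<omega>) \<le> topl m l (\<lambda>i. total (G i) \<omega>)" if "\<omega> \<in> space M" for \<omega>
    unfolding P_def K_def using assms(1,2) that G(2) BB by (rule topl_total_ge_prod_heavy)
  ultimately have lower: "(\<integral>\<omega>. l / 4 * (1 - P \<omega>) \<partial>M) \<le> (\<integral>\<omega>. topl m l (\<lambda>i. total (G i) \<omega>) \<partial>M)"
    using assms(2) G(2) integrable_total by (intro integral_mono integrable_topl) auto
  have "(\<integral>\<omega>. P \<omega> \<partial>M) \<le> exp (- (1 / l) * (\<Sum>k\<in>K. prob (heavy (snd k))))"
    unfolding P_def using \<open>finite K\<close> _ K_sub c
  proof (rule expectation_prod_heavy_le_exp)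
    show "disjoint_family_on snd K"
      unfolding K_def by (rule disjoint_family_on_snd_Sigma[OF G(1)]) (use BB in auto)
  qed
  then have "l / 4 * (1 - exp (- (\<Sum>k\<in>K. prob (heavy (snd k))) / l)) \<le> l / 4 * (1 - (\<integral>\<omega>. P \<omega> \<partial>M))"
    by (intro mult_left_mono) simp_all
  also have "\<dots> = (\<integral>\<omega>. l / 4 * (1 - P \<omega>) \<partial>M)"
    using \<open>integrable M P\<close> by (simp add: prob_space)
  finally show ?thesis
    using lower by linarith
qed

lemma exists_machine_bundles:
  fixes m :: nat
  assumes "\<And>i. i < m \<Longrightarrow> G i \<subseteq> J"
  shows "\<exists>BB. (\<forall>i<m. BB i \<subseteq> Pow (G i) \<and> disjoint (BB i)
      \<and> (\<forall>A\<in>BB i. 1 \<le> (\<Sum>j\<in>A. eff_size M lam (Z j))))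
    \<and> (\<Sum>i<m. \<Sum>j\<in>G i. eff_size M lam (Z j)) \<le> 5/4 * card (SIGMA i:{..<m}. BB i) + m"
proof -
  have "\<forall>i\<in>{..<m}. \<exists>BB. BB \<subseteq> Pow (G i) \<and> disjoint BB \<and> (\<forall>A\<in>BB. 1 \<le> (\<Sum>j\<in>A. eff_size M lam (Z j)))
      \<and> (\<Sum>j\<in>G i. eff_size M lam (Z j)) \<le> (1 + 1/4) * card BB + 1"
    by (intro ballI exists_bundles) (use assms finite_subset_J eff_size_bounds(2) in auto)
  from bchoice[OF this] obtain BB where BB: "\<forall>i\<in>{..<m}. BB i \<subseteq> Pow (G i) \<and> disjoint (BB i)
      \<and> (\<forall>A\<in>BB i. 1 \<le> (\<Sum>j\<in>A. eff_size M lam (Z j)))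
      \<and> (\<Sum>j\<in>G i. eff_size M lam (Z j)) \<le> (1 + 1/4) * card (BB i) + 1"
    by blast
  have "finite (BB i)" if "i < m" for i
    using BB that by (intro finite_bundles[OF assms[OF that]]) auto
  then have "card (SIGMA i:{..<m}. BB i) = (\<Sum>i<m. card (BB i))"
    by (intro card_SigmaI) auto
  then have "(\<Sum>i<m. 5/4 * card (BB i) + 1) = 5/4 * card (SIGMA i:{..<m}. BB i) + m"
    by (simp add: sum.distrib sum_distrib_left)
  moreover have "(\<Sum>i<m. \<Sum>j\<in>G i. eff_size M lam (Z j)) \<le> (\<Sum>i<m. 5/4 * card (BB i) + 1)"
    using BB by (intro sum_mono) auto
  ultimately show ?thesis
    using BB by (intro exI[of _ BB]) auto
qed

lemma expectation_topl_total_gt: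
  assumes "1 \<le> l" "l * lam \<le> 2 * m" "2 \<le> lam"
    and G: "disjoint_family_on G {..<m}" "\<And>i. i < m \<Longrightarrow> G i \<subseteq> J"
    and big: "8 * m < (\<Sum>i<m. \<Sum>j\<in>G i. eff_size M lam (Z j))"
  shows "l / 8 < (\<integral>\<omega>. topl m l (\<lambda>i. total (G i) \<omega>) \<partial>M)"
proof -
  have "real l * 2 \<le> real l * lam"
    using assms(3) by (intro mult_left_mono) auto
  then have "l \<le> m"
    using assms(2) by simp
  obtain BB where BB': "\<forall>i<m. BB i \<subseteq> Pow (G i) \<and> disjoint (BB i)
      \<and> (\<forall>A\<in>BB i. 1 \<le> (\<Sum>j\<in>A. eff_size M lam (Z j)))"
    and count: "(\<Sum>i<m. \<Sum>j\<in>G i. eff_size M lam (Z j)) \<le> 5/4 * card (SIGMA i:{..<m}. BB i) + m"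
    using exists_machine_bundles[where m = m and G = G] G(2) by blast
  then have BB: "\<And>i. i < m \<Longrightarrow> BB i \<subseteq> Pow (G i)" "\<And>i. i < m \<Longrightarrow> disjoint (BB i)"
    "\<And>i A. i < m \<Longrightarrow> A \<in> BB i \<Longrightarrow> 1 \<le> (\<Sum>j\<in>A. eff_size M lam (Z j))"
    by auto
  define K where "K = (SIGMA i:{..<m}. BB i)"
  have "(sqrt lam - 1) / lam \<le> prob (heavy (snd k))" if "k \<in> K" for k
  proof -
    from that obtain i A where "k = (i, A)" "i < m" "A \<in> BB i"
      unfolding K_def by auto
    then show ?thesis
      using BB(1)[of i] BB(3)[of i A] G(2)[of i] by (intro prob_heavy_ge) auto
  qed
  then have "card K * ((sqrt lam - 1) / lam) \<le> (\<Sum>k\<in>K. prob (heavy (snd k)))"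
    using sum_mono[of K "\<lambda>_. (sqrt lam - 1) / lam"] by simp
  moreover have "l < card K * ((sqrt lam - 1) / lam)"
    using big count assms(2,3) unfolding K_def by (intro less_mult_sqrt_sub_one_div) auto
  ultimately have "l < (\<Sum>k\<in>K. prob (heavy (snd k)))"
    by linarith
  then have "1 < (\<Sum>k\<in>K. prob (heavy (snd k))) / l"
    using assms(1) by (simp add: less_divide_eq)
  then have "l / 8 < l / 4 * (1 - exp (- (\<Sum>k\<in>K. prob (heavy (snd k))) / l))"
    using exp_minus_less_half assms(1) by simp
  also have "\<dots> \<le> (\<integral>\<omega>. topl m l (\<lambda>i. total (G i) \<omega>) \<partial>M)"
    unfolding K_def using assms(1) \<open>l \<le> m\<close> G BB(1,2) by (rule expectation_topl_ge_bundles)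
  finally show ?thesis .
qed

end

section \<open>Stochastic load balancing\<close>

lemma (in prob_space) AE_less_of_prob_ge_zero:
  fixes X :: "'a \<Rightarrow> real"
  assumes "X \<in> borel_measurable M" "prob {\<omega> \<in> space M. b \<le> X \<omega>} = 0"
  shows "AE \<omega> in M. X \<omega> < b"
proof -
  have N: "{\<omega> \<in> space M. b \<le> X \<omega>} \<in> events"
    using assms(1) by measurable
  have "{\<omega> \<in> space M. \<not> X \<omega> < b} = {\<omega> \<in> space M. b \<le> X \<omega>}"
    by (auto simp: not_less)
  then show ?thesis
    using assms(2) N by (simp add: AE_iff_measurable[OF N] emeasure_eq_measure)
qed

lemma (in prob_space) exists_bounded_modification:
  fixes X :: "'i \<Rightarrow> 'a \<Rightarrow> real"
  assumes "indep_vars (\<lambda>_. borel) X J" "finite J" "a < b"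
    and "\<And>j. j \<in> J \<Longrightarrow> AE \<omega> in M. a \<le> X j \<omega> \<and> X j \<omega> < b"
  shows "\<exists>Y. indep_vars (\<lambda>_. borel) Y J \<and> (\<forall>j \<omega>. a \<le> Y j \<omega> \<and> Y j \<omega> < b)
    \<and> (AE \<omega> in M. \<forall>j\<in>J. Y j \<omega> = X j \<omega>)"
proof (intro exI conjI allI)
  define f where "f x = (if a \<le> x \<and> x < b then x else a)" for x
  have "f \<in> borel_measurable borel"
    unfolding f_def by measurable
  then show "indep_vars (\<lambda>_. borel) (\<lambda>j \<omega>. f (X j \<omega>)) J"
    by (intro indep_vars_compose2[OF assms(1)])
  show "a \<le> f (X j \<omega>)" "f (X j \<omega>) < b" for j \<omega>
    using assms(3) by (simp_all add: f_def)
  show "AE \<omega> in M. \<forall>j\<in>J. f (X j \<omega>) = X j \<omega>"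
  proof (subst AE_finite_all[OF assms(2)], intro ballI)
    fix j assume "j \<in> J"
    from assms(4)[OF this] show "AE \<omega> in M. f (X j \<omega>) = X j \<omega>"
      by eventually_elim (simp add: f_def)
  qed
qed

lemma eff_size_cong_AE:
  assumes "AE \<omega> in M. Z \<omega> = Z' \<omega>" "Z \<in> borel_measurable M" "Z' \<in> borel_measurable M"
  shows "eff_size M lam Z = eff_size M lam Z'"
proof -
  have "(\<integral>\<omega>. Z \<omega> \<partial>M) = (\<integral>\<omega>. Z' \<omega> \<partial>M)" "(\<integral>\<omega>. lam powr Z \<omega> \<partial>M) = (\<integral>\<omega>. lam powr Z' \<omega> \<partial>M)"
    using assms by (auto intro: integral_cong_AE)
  then show ?thesis
    by (simp add: eff_size_def)
qed

lemma integral_topl_load_cong_AE: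
  assumes "AE \<omega> in M. \<forall>j\<in>J. Y j \<omega> = X j \<omega>"
    and "\<And>j. j \<in> J \<Longrightarrow> X j \<in> borel_measurable M" "\<And>j. j \<in> J \<Longrightarrow> Y j \<in> borel_measurable M"
  shows "(\<integral>\<omega>. topl m l (\<lambda>i. load J \<sigma> Y i \<omega>) \<partial>M) = (\<integral>\<omega>. topl m l (\<lambda>i. load J \<sigma> X i \<omega>) \<partial>M)"
proof (rule integral_cong_AE)
  show "AE \<omega> in M. topl m l (\<lambda>i. load J \<sigma> Y i \<omega>) = topl m l (\<lambda>i. load J \<sigma> X i \<omega>)"
    using assms(1) by eventually_elim (simp add: load_def)
  have "(\<lambda>\<omega>. topl m l (\<lambda>i. load J \<sigma> Z i \<omega>)) \<in> borel_measurable M"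
    if "\<And>j. j \<in> J \<Longrightarrow> Z j \<in> borel_measurable M" for Z
    unfolding load_def using that by (intro borel_measurable_topl borel_measurable_sum) auto
  then show "(\<lambda>\<omega>. topl m l (\<lambda>i. load J \<sigma> X i \<omega>)) \<in> borel_measurable M"
    "(\<lambda>\<omega>. topl m l (\<lambda>i. load J \<sigma> Y i \<omega>)) \<in> borel_measurable M"
    using assms(2,3) by blast+
qed

lemma expected_topl_load_bounds:
  fixes X :: "'j \<Rightarrow> 'a \<Rightarrow> real" and \<alpha> :: real
  assumes "prob_space M" "0 < \<theta>" "0 < l" "l \<le> m" "finite J"
    and "prob_space.indep_vars M (\<lambda>_. borel) X J" "\<And>j \<omega>. 0 \<le> X j \<omega> \<and> X j \<omega> < \<theta>"
    and "\<And>j. j \<in> J \<Longrightarrow> \<sigma> j < m"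
  defines "b j \<equiv> eff_size M (real (2 * m div l)) (\<lambda>\<omega>. X j \<omega> / (4 * \<theta>))"
    and "ETop \<equiv> \<integral>\<omega>. topl m l (\<lambda>i. load J \<sigma> X i \<omega>) \<partial>M"
  shows "1 \<le> \<alpha> \<Longrightarrow> (\<And>i. i < m \<Longrightarrow> (\<Sum>j\<in>{j\<in>J. \<sigma> j = i}. b j) \<le> \<alpha>) \<Longrightarrow> ETop \<le> 32 * \<alpha> * l * \<theta>"
    and "8 * m < (\<Sum>j\<in>J. b j) \<Longrightarrow> l * \<theta> / 2 < ETop"
proof -
  define lam where "lam = real (2 * m div l)"
  define G where "G i = {j \<in> J. \<sigma> j = i}" for i
  have lam: "2 \<le> lam" "m \<le> l * lam" "l * lam \<le> 2 * m"
    using double_div_bounds[OF assms(3,4)] by (simp_all add: lam_def)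
  interpret small_jobs M "\<lambda>j \<omega>. X j \<omega> / (4 * \<theta>)" J lam
  proof (intro small_jobs.intro[OF assms(1)] small_jobs_axioms.intro)
    show "prob_space.indep_vars M (\<lambda>_. borel) (\<lambda>j \<omega>. X j \<omega> / (4 * \<theta>)) J"
      by (rule prob_space.indep_vars_compose2[OF assms(1,6)]) measurable
    show "finite J" "1 < lam"
      using assms(5) lam(1) by auto
    show "0 \<le> X j \<omega> / (4 * \<theta>)" "X j \<omega> / (4 * \<theta>) \<le> 1/4" for j \<omega>
      using assms(2) assms(7)[of j \<omega>] by simp_all
  qed
  have "load J \<sigma> X i \<omega> = 4 * \<theta> * total (G i) \<omega>" for i \<omega>
    using assms(2) by (simp add: load_def total_def G_def sum_distrib_left)
  then have ETop: "ETop = 4 * \<theta> * (\<integral>\<omega>. topl m l (\<lambda>i. total (G i) \<omega>) \<partial>M)"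
    using topl_cmult[OF assms(4), of "4 * \<theta>"] assms(2) by (simp add: ETop_def)
  show "ETop \<le> 32 * \<alpha> * l * \<theta>"
    if "1 \<le> \<alpha>" "\<And>i. i < m \<Longrightarrow> (\<Sum>j\<in>{j\<in>J. \<sigma> j = i}. b j) \<le> \<alpha>"
  proof -
    have "(\<integral>\<omega>. topl m l (\<lambda>i. total (G i) \<omega>) \<partial>M) \<le> l * (\<alpha> + 1) + m / (lam * ln lam)"
      using assms(4) that(2) by (intro expectation_topl_total_le) (auto simp: G_def b_def lam_def)
    also have "\<dots> \<le> l * (\<alpha> + 1) + 2 * l"
      using div_mult_ln_le[OF lam(1,2)] by simp
    also have "\<dots> \<le> 8 * \<alpha> * l"
      using that(1) mult_left_mono[of "\<alpha> + 3" "8 * \<alpha>" l] by (simp add: algebra_simps)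
    finally show ?thesis
      using assms(2) unfolding ETop by simp
  qed
  show "l * \<theta> / 2 < ETop" if "8 * m < (\<Sum>j\<in>J. b j)"
  proof -
    have grouped: "(\<Sum>i<m. \<Sum>j\<in>G i. eff_size M lam (\<lambda>\<omega>. X j \<omega> / (4 * \<theta>))) = (\<Sum>j\<in>J. b j)"
      unfolding G_def b_def lam_def by (rule sum.group) (use assms(5,8) in auto)
    have "l / 8 < (\<integral>\<omega>. topl m l (\<lambda>i. total (G i) \<omega>) \<partial>M)"
      using that[folded grouped] assms(3) lam
      by (intro expectation_topl_total_gt) (auto simp: G_def disjoint_family_on_def)
    then show ?thesis
      using assms(2) unfolding ETop by simp
  qed
qed

lemma expected_topl_load_bounds_AE:
  fixes X :: "'j \<Rightarrow> 'a \<Rightarrow> real" and \<alpha> :: real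
  assumes "prob_space M" "0 < \<theta>" "0 < l" "l \<le> m" "finite J"
    and "prob_space.indep_vars M (\<lambda>_. borel) X J"
    and "\<And>j. j \<in> J \<Longrightarrow> AE \<omega> in M. 0 \<le> X j \<omega> \<and> X j \<omega> < \<theta>" "\<And>j. j \<in> J \<Longrightarrow> \<sigma> j < m"
  defines "b j \<equiv> eff_size M (real (2 * m div l)) (\<lambda>\<omega>. X j \<omega> / (4 * \<theta>))"
    and "ETop \<equiv> \<integral>\<omega>. topl m l (\<lambda>i. load J \<sigma> X i \<omega>) \<partial>M"
  shows "1 \<le> \<alpha> \<Longrightarrow> (\<And>i. i < m \<Longrightarrow> (\<Sum>j\<in>{j\<in>J. \<sigma> j = i}. b j) \<le> \<alpha>) \<Longrightarrow> ETop \<le> 32 * \<alpha> * l * \<theta>"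
    and "8 * m < (\<Sum>j\<in>J. b j) \<Longrightarrow> l * \<theta> / 2 < ETop"
proof -
  interpret prob_space M
    by (rule assms(1))
  obtain Y where Y: "indep_vars (\<lambda>_. borel) Y J" "\<And>j \<omega>. 0 \<le> Y j \<omega> \<and> Y j \<omega> < \<theta>"
    "AE \<omega> in M. \<forall>j\<in>J. Y j \<omega> = X j \<omega>"
    using exists_bounded_modification[OF assms(6,5,2,7)] by blast
  have measurable: "j \<in> J \<Longrightarrow> X j \<in> borel_measurable M" "j \<in> J \<Longrightarrow> Y j \<in> borel_measurable M" for j
    using assms(6) Y(1) by (simp_all add: indep_vars_def)
  have b: "eff_size M (real (2 * m div l)) (\<lambda>\<omega>. Y j \<omega> / (4 * \<theta>)) = b j" if "j \<in> J" for j
    unfolding b_def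
  proof (rule eff_size_cong_AE)
    show "AE \<omega> in M. Y j \<omega> / (4 * \<theta>) = X j \<omega> / (4 * \<theta>)"
      using Y(3) by eventually_elim (use that in auto)
  qed (use that measurable in auto)
  have ETop: "(\<integral>\<omega>. topl m l (\<lambda>i. load J \<sigma> Y i \<omega>) \<partial>M) = ETop"
    unfolding ETop_def using Y(3) measurable by (rule integral_topl_load_cong_AE)
  note bounds = expected_topl_load_bounds[where \<sigma> = \<sigma>, OF assms(1-5) Y(1,2) assms(8)]
  show "ETop \<le> 32 * \<alpha> * l * \<theta>"
    if "1 \<le> \<alpha>" "\<And>i. i < m \<Longrightarrow> (\<Sum>j\<in>{j\<in>J. \<sigma> j = i}. b j) \<le> \<alpha>"
  proof -
    have "(\<integral>\<omega>. topl m l (\<lambda>i. load J \<sigma> Y i \<omega>) \<partial>M) \<le> 32 * \<alpha> * l * \<theta>"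
      by (rule bounds(1)) (use that b in simp_all)
    then show ?thesis
      by (simp add: ETop)
  qed
  show "l * \<theta> / 2 < ETop" if "8 * m < (\<Sum>j\<in>J. b j)"
    using bounds(2) that by (simp add: b ETop)
qed

theorem lemma13:
  fixes M :: "'a measure" and X :: "'j \<Rightarrow> 'a \<Rightarrow> real" and J :: "'j set"
    and \<sigma> :: "'j \<Rightarrow> nat" and m l :: nat and \<theta> :: real
  assumes "prob_space M"
    and "\<theta> > 0"
    and "l \<in> {1..m}"
    and "finite J"
    and "\<And>j. j \<in> J \<Longrightarrow> X j \<in> borel_measurable M"
    and "prob_space.indep_vars M (\<lambda>_. borel) X J"
    and "\<And>j. j \<in> J \<Longrightarrow> AE \<omega> in M. X j \<omega> \<ge> 0"
    and "\<And>j. j \<in> J \<Longrightarrow> measure M {\<omega> \<in> space M. X j \<omega> \<ge> \<theta>} = 0"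
    and "\<And>j. j \<in> J \<Longrightarrow> \<sigma> j \<in> {..<m}"
  shows "let lam = real (2 * m div l);
             b = (\<lambda>j. eff_size M lam (\<lambda>\<omega>. X j \<omega> / (4 * \<theta>)));
             \<alpha> = max 1 (Max ((\<lambda>i. \<Sum>j\<in>{j\<in>J. \<sigma> j = i}. b j) ` {..<m}));
             ETop = (\<integral>\<omega>. topl m l (\<lambda>i. load J \<sigma> X i \<omega>) \<partial>M)
         in ((\<Sum>j\<in>J. b j) \<le> 8 * m \<longrightarrow> ETop \<le> 32 * \<alpha> * l * \<theta>)
          \<and> ((\<Sum>j\<in>J. b j) > 8 * m \<longrightarrow> ETop > l * \<theta> / 2)"
proof -
  interpret prob_space M
    by (rule assms(1))
  have l: "0 < l" "l \<le> m" "\<And>j. j \<in> J \<Longrightarrow> \<sigma> j < m"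
    using assms(3,9) by auto
  have "AE \<omega> in M. 0 \<le> X j \<omega> \<and> X j \<omega> < \<theta>" if "j \<in> J" for j
    using assms(7)[OF that] AE_less_of_prob_ge_zero[OF assms(5,8)[OF that]] by eventually_elim simp
  note bounds = expected_topl_load_bounds_AE[where \<sigma> = \<sigma>, OF assms(1,2) l(1,2) assms(4,6) this l(3)]
  define \<alpha> where "\<alpha> = max 1 (Max ((\<lambda>i. \<Sum>j\<in>{j\<in>J. \<sigma> j = i}.
    eff_size M (real (2 * m div l)) (\<lambda>\<omega>. X j \<omega> / (4 * \<theta>))) ` {..<m}))"
  have "(\<integral>\<omega>. topl m l (\<lambda>i. load J \<sigma> X i \<omega>) \<partial>M) \<le> 32 * \<alpha> * l * \<theta>"
  proof (rule bounds(1))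
    show "1 \<le> \<alpha>"
      unfolding \<alpha>_def by (rule max.cobounded1)
    show "(\<Sum>j\<in>{j\<in>J. \<sigma> j = i}. eff_size M (real (2 * m div l)) (\<lambda>\<omega>. X j \<omega> / (4 * \<theta>))) \<le> \<alpha>"
      if "i < m" for i
      using that by (simp add: \<alpha>_def Max_ge le_max_iff_disj)
  qed
  then show ?thesis
    using bounds(2) unfolding Let_def \<alpha>_def[symmetric] by simp
qed

end
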